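(* For every integer $q\ge2$, $\gamma^{DLD}(K_q^3)=q^2$.
   Context: $K_q^3=K_q\square K_q\square K_q$ is the graph with vertex set $\{1,\dots,q\}^3$ in which two vertices are adjacent iff they differ in exactly one coordinate. For a code (nonempty vertex subset) $C$ and vertex $v$, $I(C;v)=N[v]\cap C$, where $N[v]$ is the closed neighbourhood. A code $C$ is solid-locating-dominating if for all distinct non-codewords $u,v$, $I(C;u)\setminus I(C;v)\ne\emptyset$. $\gamma^{DLD}(G)$ is the minimum size of a solid-locating-dominating code in the finite graph $G$. *)

theory Defs
  imports Main
begin

type_synonym vtx = "nat \<times> nat \<times> nat"

definition Kq3_vertices :: "nat \<Rightarrow> vtx set" where
  "Kq3_vertices q = {1..q} \<times> {1..q} \<times> {1..q}"

definition Kq3_adj :: "vtx \<Rightarrow> vtx \<Rightarrow> bool" where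
  "Kq3_adj u v = (case u of (a1, a2, a3) \<Rightarrow> case v of (b1, b2, b3) \<Rightarrow>
     (a1 \<noteq> b1 \<and> a2 = b2 \<and> a3 = b3) \<or>
     (a1 = b1 \<and> a2 \<noteq> b2 \<and> a3 = b3) \<or>
     (a1 = b1 \<and> a2 = b2 \<and> a3 \<noteq> b3))"

definition closed_nbhd :: "'a set \<Rightarrow> ('a \<Rightarrow> 'a \<Rightarrow> bool) \<Rightarrow> 'a \<Rightarrow> 'a set" where
  "closed_nbhd V E v = {u \<in> V. u = v \<or> E v u}"

definition I_set :: "'a set \<Rightarrow> ('a \<Rightarrow> 'a \<Rightarrow> bool) \<Rightarrow> 'a set \<Rightarrow> 'a \<Rightarrow> 'a set" where
  "I_set V E C v = closed_nbhd V E v \<inter> C"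

definition is_DLD :: "'a set \<Rightarrow> ('a \<Rightarrow> 'a \<Rightarrow> bool) \<Rightarrow> 'a set \<Rightarrow> bool" where
  "is_DLD V E C \<longleftrightarrow> C \<subseteq> V \<and> C \<noteq> {} \<and>
     (\<forall>u \<in> V - C. \<forall>v \<in> V - C. u \<noteq> v \<longrightarrow> I_set V E C u - I_set V E C v \<noteq> {})"

definition gamma_DLD :: "'a set \<Rightarrow> ('a \<Rightarrow> 'a \<Rightarrow> bool) \<Rightarrow> nat" where
  "gamma_DLD V E = (LEAST k. \<exists>C. is_DLD V E C \<and> card C = k)"

end

theory Submission
  imports Defs
begin

(* Upper bound: the zero-sum code {(a,b,c). q dvd a + b + c} has q^2 elements; a non-codeword
   sees exactly one codeword on each of its three lines, and it is the only common neighbour of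
   these three codewords.

   Lower bound: for distinct non-codewords u and w, I(u) is never contained in the closed
   neighbourhood of w.  For q >= 3 every edge lies in a triangle, and this forces |I(u)| >= 2 for
   every non-codeword u.  Hence if the column (a,b,_) holds no codeword, the planes x = a and y = b
   together hold at least 2q codewords.  A plane x = a with fewer than q codewords contains such an
   empty column and also an empty line (a,_,z); then (a,b,z) sees codewords only on the line
   (_,b,z), which forces (a',b,z) into C for every a' <> a.  So sending a deficient plane x = a to
   a plane y = b with (a,b,_) empty is injective, and the total deficit (below q) of the planes
   x = a is at most the total excess (above q) of the planes y = b.  Adding the symmetric
   inequality gives |C| >= q^2.

   For the cube q = 2 with |C| <= 3, some plane x = a holds at most one codeword, so it contains a
   non-codeword v whose two neighbours in that plane are non-codewords as well.  Then v sees at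
   most its third neighbour v', so v' and its two neighbours in the opposite plane are all
   codewords; this determines C and leaves a non-codeword that sees no codeword at all. *)

subsection \<open>Solid-locating-dominating codes in arbitrary graphs\<close>

lemma mem_I_set: "x \<in> I_set V E C v \<longleftrightarrow> x \<in> V \<and> (x = v \<or> E v x) \<and> x \<in> C"
  by (auto simp: I_set_def closed_nbhd_def)

lemma is_DLD_finite: "is_DLD V E C \<Longrightarrow> finite V \<Longrightarrow> finite C"
  unfolding is_DLD_def by (metis finite_subset)

lemma is_DLD_mem_if_I_set_subset:
  assumes DLD: "is_DLD V E C" and "u \<in> V" "u \<notin> C" "w \<in> V" "w \<noteq> u"
    and sub: "I_set V E C u \<subseteq> closed_nbhd V E w"
  shows "w \<in> C"
proof (rule ccontr)
  assume "w \<notin> C"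
  have "\<forall>u\<in>V - C. \<forall>v\<in>V - C. u \<noteq> v \<longrightarrow> I_set V E C u - I_set V E C v \<noteq> {}"
    using DLD by (simp add: is_DLD_def)
  then have "I_set V E C u - I_set V E C w \<noteq> {}"
    using assms(2-5) \<open>w \<notin> C\<close> by simp
  moreover have "I_set V E C u \<subseteq> I_set V E C w"
    using sub by (auto simp: I_set_def)
  ultimately show False by blast
qed

lemma is_DLD_I_set_nonempty:
  assumes DLD: "is_DLD V E C" and u: "u \<in> V" "u \<notin> C" and w: "w \<in> V" "w \<noteq> u" "E u w"
  shows "I_set V E C u \<noteq> {}"
proof
  assume empty: "I_set V E C u = {}"
  then have "w \<in> C"
    using is_DLD_mem_if_I_set_subset[OF DLD u w(1,2)] by simp
  with w have "w \<in> I_set V E C u" by (simp add: mem_I_set)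
  with empty show False by simp
qed

lemma is_DLD_two_le_card_I_set:
  assumes DLD: "is_DLD V E C" and "finite V" and u: "u \<in> V" "u \<notin> C"
    and nbr: "w \<in> V" "w \<noteq> u" "E u w"
    and triangle: "\<And>c. c \<in> V \<Longrightarrow> E u c \<Longrightarrow> \<exists>w\<in>V. w \<noteq> u \<and> w \<noteq> c \<and> E u w \<and> E w c"
  shows "2 \<le> card (I_set V E C u)"
proof (rule ccontr)
  assume "\<not> 2 \<le> card (I_set V E C u)"
  moreover have "0 < card (I_set V E C u)"
    using \<open>finite V\<close> is_DLD_I_set_nonempty[OF DLD u nbr]
    by (simp add: card_gt_0_iff I_set_def closed_nbhd_def)
  ultimately have "card (I_set V E C u) = 1"
    by linarith
  then obtain c where c: "I_set V E C u = {c}"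
    by (rule card_1_singletonE)
  then have "c \<in> V" "E u c" "c \<in> C"
    using u by (auto simp: mem_I_set dest: equalityD2)
  then obtain w where w: "w \<in> V" "w \<noteq> u" "w \<noteq> c" "E u w" "E w c"
    using triangle by blast
  have "I_set V E C u \<subseteq> closed_nbhd V E w"
    using c w(5) \<open>c \<in> V\<close> by (simp add: closed_nbhd_def)
  then have "w \<in> C"
    by (rule is_DLD_mem_if_I_set_subset[OF DLD u w(1,2)])
  with w(1,4) have "w \<in> I_set V E C u"
    by (simp add: mem_I_set)
  with c w(3) show False by simp
qed

lemma closed_nbhd_image:
  assumes "inj \<sigma>" "\<sigma> ` V = V" "\<And>x y. E (\<sigma> x) (\<sigma> y) = E x y"
  shows "closed_nbhd V E (\<sigma> u) = \<sigma> ` closed_nbhd V E u"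
proof
  show "\<sigma> ` closed_nbhd V E u \<subseteq> closed_nbhd V E (\<sigma> u)"
    using assms(2,3) by (auto simp: closed_nbhd_def)
  show "closed_nbhd V E (\<sigma> u) \<subseteq> \<sigma> ` closed_nbhd V E u"
  proof
    fix x assume x: "x \<in> closed_nbhd V E (\<sigma> u)"
    then have "x \<in> \<sigma> ` V"
      using assms(2) by (simp add: closed_nbhd_def)
    then obtain y where "y \<in> V" "x = \<sigma> y" by blast
    with x assms(1,3) show "x \<in> \<sigma> ` closed_nbhd V E u"
      by (auto simp: closed_nbhd_def inj_eq)
  qed
qed

lemma is_DLD_image:
  assumes DLD: "is_DLD V E C" and aut: "inj \<sigma>" "\<sigma> ` V = V" "\<And>x y. E (\<sigma> x) (\<sigma> y) = E x y"
  shows "is_DLD V E (\<sigma> ` C)"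
  unfolding is_DLD_def
proof (intro conjI ballI impI)
  have "C \<subseteq> V" "C \<noteq> {}"
    using DLD by (simp_all add: is_DLD_def)
  then show "\<sigma> ` C \<subseteq> V" "\<sigma> ` C \<noteq> {}"
    using aut(2) by blast+
  have I_image: "I_set V E (\<sigma> ` C) (\<sigma> u) = \<sigma> ` I_set V E C u" for u
    using closed_nbhd_image[of \<sigma> V E, OF aut] image_Int[OF aut(1)] by (simp add: I_set_def)
  fix u' v' assume u'v': "u' \<in> V - \<sigma> ` C" "v' \<in> V - \<sigma> ` C" "u' \<noteq> v'"
  then obtain u v where uv: "u \<in> V" "v \<in> V" "u' = \<sigma> u" "v' = \<sigma> v"
    using aut(2) by (metis Diff_iff imageE)
  with u'v' have "u \<in> V - C" "v \<in> V - C" "u \<noteq> v"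
    by auto
  with DLD have "I_set V E C u - I_set V E C v \<noteq> {}"
    by (simp add: is_DLD_def)
  then show "I_set V E (\<sigma> ` C) u' - I_set V E (\<sigma> ` C) v' \<noteq> {}"
    by (simp add: uv I_image image_set_diff[OF aut(1), symmetric])
qed

lemma gamma_DLD_eqI:
  assumes "is_DLD V E C" "card C = k" "\<And>C'. is_DLD V E C' \<Longrightarrow> k \<le> card C'"
  shows "gamma_DLD V E = k"
  unfolding gamma_DLD_def using assms by (intro Least_equality) auto

lemma ex_in_atLeastAtMost_notin:
  assumes "finite A" "card A < q"
  shows "\<exists>x\<in>{1..q}. x \<notin> A"
proof (rule ccontr)
  assume "\<not> ?thesis"
  then have "{1..q} \<subseteq> A" by auto
  from card_mono[OF assms(1) this] assms(2) show False by simp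
qed

lemma card_eq_sum_card_fibres:
  assumes "finite S" "finite T" "g ` S \<subseteq> T"
  shows "card S = (\<Sum>y\<in>T. card {x \<in> S. g x = y})"
  using sum.group[OF assms, of "\<lambda>_. 1 :: nat"] by simp

lemma Kq3_adj_iff [simp]:
  "Kq3_adj (a1, a2, a3) (b1, b2, b3) \<longleftrightarrow>
     (a1 \<noteq> b1 \<and> a2 = b2 \<and> a3 = b3) \<or> (a1 = b1 \<and> a2 \<noteq> b2 \<and> a3 = b3) \<or>
     (a1 = b1 \<and> a2 = b2 \<and> a3 \<noteq> b3)"
  by (simp add: Kq3_adj_def)

lemma mem_Kq3_vertices [simp]:
  "(a, b, c) \<in> Kq3_vertices q \<longleftrightarrow> a \<in> {1..q} \<and> b \<in> {1..q} \<and> c \<in> {1..q}"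
  by (simp add: Kq3_vertices_def)

lemma finite_Kq3_vertices [simp]: "finite (Kq3_vertices q)"
  by (simp add: Kq3_vertices_def)

lemma Kq3_has_neighbour:
  assumes "2 \<le> q" "u \<in> Kq3_vertices q"
  shows "\<exists>w\<in>Kq3_vertices q. w \<noteq> u \<and> Kq3_adj u w"
proof -
  obtain a b c where u: "u = (a, b, c)" by (cases u)
  obtain x where "x \<in> {1..q}" "x \<notin> {a}"
    using ex_in_atLeastAtMost_notin[of "{a}" q] assms(1) by auto
  with assms(2) show ?thesis
    unfolding u by (intro bexI[of _ "(x, b, c)"]) auto
qed

lemma Kq3_edge_in_triangle:
  assumes "3 \<le> q" "u \<in> Kq3_vertices q" "c \<in> Kq3_vertices q" "Kq3_adj u c"
  shows "\<exists>w\<in>Kq3_vertices q. w \<noteq> u \<and> w \<noteq> c \<and> Kq3_adj u w \<and> Kq3_adj w c"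
proof -
  obtain a1 a2 a3 where u: "u = (a1, a2, a3)" by (cases u)
  obtain c1 c2 c3 where c: "c = (c1, c2, c3)" by (cases c)
  have third: "\<exists>x\<in>{1..q}. x \<notin> {y, z}" for y z
  proof -
    have "card {y, z} < q"
      using assms(1) by (cases "y = z") auto
    then show ?thesis by (rule ex_in_atLeastAtMost_notin[rotated]) simp
  qed
  from assms(4) consider "c1 \<noteq> a1" "c2 = a2" "c3 = a3" | "c1 = a1" "c2 \<noteq> a2" "c3 = a3"
    | "c1 = a1" "c2 = a2" "c3 \<noteq> a3"
    unfolding u c by auto
  then show ?thesis
  proof cases
    case 1
    moreover obtain x where "x \<in> {1..q}" "x \<notin> {a1, c1}" using third by blast
    ultimately show ?thesis
      using assms(2) unfolding u c by (intro bexI[of _ "(x, a2, a3)"]) auto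
  next
    case 2
    moreover obtain x where "x \<in> {1..q}" "x \<notin> {a2, c2}" using third by blast
    ultimately show ?thesis
      using assms(2) unfolding u c by (intro bexI[of _ "(a1, x, a3)"]) auto
  next
    case 3
    moreover obtain x where "x \<in> {1..q}" "x \<notin> {a3, c3}" using third by blast
    ultimately show ?thesis
      using assms(2) unfolding u c by (intro bexI[of _ "(a1, a2, x)"]) auto
  qed
qed

definition swap12 :: "vtx \<Rightarrow> vtx" where
  "swap12 = (\<lambda>(a, b, c). (b, a, c))"

lemma swap12_simp [simp]: "swap12 (a, b, c) = (b, a, c)"
  by (simp add: swap12_def)

lemma swap12_swap12 [simp]: "swap12 (swap12 v) = v"
  by (cases v) simp

lemma inj_swap12: "inj swap12"
  by (metis injI swap12_swap12)

lemma swap12_Kq3_vertices: "swap12 ` Kq3_vertices q = Kq3_vertices q"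
proof
  show "swap12 ` Kq3_vertices q \<subseteq> Kq3_vertices q"
    by (auto simp: Kq3_vertices_def)
  show "Kq3_vertices q \<subseteq> swap12 ` Kq3_vertices q"
  proof
    fix v assume "v \<in> Kq3_vertices q"
    then have "swap12 v \<in> Kq3_vertices q" by (cases v) simp
    then show "v \<in> swap12 ` Kq3_vertices q"
      by (metis image_eqI swap12_swap12)
  qed
qed

lemma Kq3_adj_swap12 [simp]: "Kq3_adj (swap12 u) (swap12 v) = Kq3_adj u v"
  by (cases u; cases v) auto

definition xlayer_card :: "vtx set \<Rightarrow> nat \<Rightarrow> nat" where
  "xlayer_card C a = card {c \<in> C. fst c = a}"

definition ylayer_card :: "vtx set \<Rightarrow> nat \<Rightarrow> nat" where
  "ylayer_card C b = card {c \<in> C. fst (snd c) = b}"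

lemma xlayer_card_swap12: "xlayer_card (swap12 ` C) = ylayer_card C"
proof
  fix a
  have "{c \<in> swap12 ` C. fst c = a} = swap12 ` {c \<in> C. fst (snd c) = a}"
    by force
  then show "xlayer_card (swap12 ` C) a = ylayer_card C a"
    by (simp add: xlayer_card_def ylayer_card_def card_image inj_on_subset[OF inj_swap12])
qed

lemma ylayer_card_swap12: "ylayer_card (swap12 ` C) = xlayer_card C"
  using xlayer_card_swap12[of "swap12 ` C"] by (simp add: image_image)

lemma xlayer_misses_value:
  assumes "finite C" "xlayer_card C a < q"
  obtains t where "t \<in> {1..q}" "\<And>c. c \<in> C \<Longrightarrow> fst c = a \<Longrightarrow> g c \<noteq> t"
proof -
  have "finite {c \<in> C. fst c = a}"
    using assms(1) by simp
  then have "card (g ` {c \<in> C. fst c = a}) < q"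
    using card_image_le[of "{c \<in> C. fst c = a}" g] assms(2) by (simp add: xlayer_card_def)
  then obtain t where t: "t \<in> {1..q}" "t \<notin> g ` {c \<in> C. fst c = a}"
    using ex_in_atLeastAtMost_notin[OF finite_imageI[OF \<open>finite {c \<in> C. fst c = a}\<close>]] by blast
  show ?thesis
  proof (rule that[OF t(1)])
    fix c assume "c \<in> C" "fst c = a"
    with t(2) show "g c \<noteq> t" by blast
  qed
qed

lemma sum_xlayer_card:
  assumes "C \<subseteq> Kq3_vertices q"
  shows "(\<Sum>a\<in>{1..q}. xlayer_card C a) = card C"
  unfolding xlayer_card_def
  by (rule card_eq_sum_card_fibres[symmetric]) (use assms finite_subset[OF assms] in \<open>auto simp: Kq3_vertices_def\<close>)

(* Subtraction on nat truncates, so the two sums are the total deficit and the total excess of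
   the planes x = a relative to q. *)
lemma card_add_xdeficit:
  assumes "C \<subseteq> Kq3_vertices q"
  shows "card C + (\<Sum>a\<in>{1..q}. q - xlayer_card C a) = q^2 + (\<Sum>a\<in>{1..q}. xlayer_card C a - q)"
proof -
  have "card C + (\<Sum>a\<in>{1..q}. q - xlayer_card C a)
      = (\<Sum>a\<in>{1..q}. xlayer_card C a + (q - xlayer_card C a))"
    by (simp only: sum.distrib sum_xlayer_card[OF assms])
  also have "\<dots> = (\<Sum>a\<in>{1..q}. q + (xlayer_card C a - q))"
    by (rule sum.cong) auto
  also have "\<dots> = q^2 + (\<Sum>a\<in>{1..q}. xlayer_card C a - q)"
    by (simp add: sum.distrib power2_eq_square)
  finally show ?thesis .
qed

subsection \<open>Lower bound for \<open>q \<ge> 3\<close>\<close>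

lemma Kq3_two_le_card_I_set:
  assumes DLD: "is_DLD (Kq3_vertices q) Kq3_adj C" and "3 \<le> q"
    and u: "u \<in> Kq3_vertices q" "u \<notin> C"
  shows "2 \<le> card (I_set (Kq3_vertices q) Kq3_adj C u)"
proof -
  obtain w where "w \<in> Kq3_vertices q" "w \<noteq> u" "Kq3_adj u w"
    using Kq3_has_neighbour[of q u] assms(2) u(1) by auto
  from is_DLD_two_le_card_I_set[OF DLD finite_Kq3_vertices u this]
  show ?thesis
    using Kq3_edge_in_triangle[OF assms(2) u(1)] by blast
qed

lemma Kq3_layer_cards_ge_if_column_empty:
  assumes DLD: "is_DLD (Kq3_vertices q) Kq3_adj C" and "3 \<le> q"
    and ab: "a \<in> {1..q}" "b \<in> {1..q}" and empty: "\<forall>z. (a, b, z) \<notin> C"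
  shows "2 * q \<le> xlayer_card C a + ylayer_card C b"
proof -
  let ?V = "Kq3_vertices q"
  let ?S = "{c \<in> C. fst c = a} \<union> {c \<in> C. fst (snd c) = b}"
  have C: "C \<subseteq> ?V" "finite C"
    using DLD is_DLD_finite[OF DLD] by (simp_all add: is_DLD_def)
  have I_sub: "I_set ?V Kq3_adj C (a, b, z) \<subseteq> {c \<in> ?S. snd (snd c) = z}" for z
  proof
    fix c assume "c \<in> I_set ?V Kq3_adj C (a, b, z)"
    with empty show "c \<in> {c \<in> ?S. snd (snd c) = z}"
      by (cases c) (auto simp: mem_I_set)
  qed
  have "2 * q = (\<Sum>z\<in>{1..q}. 2)" by simp
  also have "\<dots> \<le> (\<Sum>z\<in>{1..q}. card {c \<in> ?S. snd (snd c) = z})"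
  proof (rule sum_mono)
    fix z assume "z \<in> {1..q}"
    then have "2 \<le> card (I_set ?V Kq3_adj C (a, b, z))"
      using Kq3_two_le_card_I_set[OF DLD \<open>3 \<le> q\<close>] ab empty by simp
    also have "\<dots> \<le> card {c \<in> ?S. snd (snd c) = z}"
      using I_sub C(2) by (intro card_mono) auto
    finally show "2 \<le> card {c \<in> ?S. snd (snd c) = z}" .
  qed
  also have "\<dots> = card ?S"
    by (rule card_eq_sum_card_fibres[symmetric]) (use C in \<open>auto simp: Kq3_vertices_def\<close>)
  also have "\<dots> \<le> xlayer_card C a + ylayer_card C b"
    by (simp add: xlayer_card_def ylayer_card_def card_Un_le)
  finally show ?thesis .
qed

lemma Kq3_empty_columns_unique:
  assumes DLD: "is_DLD (Kq3_vertices q) Kq3_adj C" and small: "xlayer_card C a < q"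
    and "a \<in> {1..q}" "b \<in> {1..q}"
    and empty: "\<forall>z. (a, b, z) \<notin> C" and empty': "\<forall>z. (a', b, z) \<notin> C" and "a' \<in> {1..q}"
  shows "a = a'"
proof (rule ccontr)
  assume "a \<noteq> a'"
  let ?V = "Kq3_vertices q"
  have "finite C"
    using is_DLD_finite[OF DLD] by simp
  then obtain z where z: "z \<in> {1..q}" "\<And>c. c \<in> C \<Longrightarrow> fst c = a \<Longrightarrow> snd (snd c) \<noteq> z"
    by (rule xlayer_misses_value[where g = "\<lambda>c. snd (snd c)", OF _ small]) blast
  have row: "(a, y, z) \<notin> C" for y
    using z(2)[of "(a, y, z)"] by auto
  have v: "(a, b, z) \<in> ?V" "(a, b, z) \<notin> C"
    using assms z empty by auto
  have sub: "I_set ?V Kq3_adj C (a, b, z) \<subseteq> closed_nbhd ?V Kq3_adj (a', b, z)"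
  proof
    fix c assume "c \<in> I_set ?V Kq3_adj C (a, b, z)"
    with empty row show "c \<in> closed_nbhd ?V Kq3_adj (a', b, z)"
      by (cases c) (auto simp: mem_I_set closed_nbhd_def)
  qed
  have "(a', b, z) \<in> C"
    by (rule is_DLD_mem_if_I_set_subset[OF DLD v _ _ sub]) (use assms z \<open>a \<noteq> a'\<close> in auto)
  with empty' show False by simp
qed

lemma Kq3_xdeficit_le_yexcess:
  assumes DLD: "is_DLD (Kq3_vertices q) Kq3_adj C" and "3 \<le> q"
  shows "(\<Sum>a\<in>{1..q}. q - xlayer_card C a) \<le> (\<Sum>b\<in>{1..q}. ylayer_card C b - q)"
proof -
  let ?D = "{a \<in> {1..q}. xlayer_card C a < q}"
  have "finite C"
    using is_DLD_finite[OF DLD] by simp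
  have "\<exists>b\<in>{1..q}. \<forall>z. (a, b, z) \<notin> C" if "a \<in> ?D" for a
  proof -
    from \<open>a \<in> ?D\<close> have "xlayer_card C a < q" by simp
    with \<open>finite C\<close> obtain b
      where b: "b \<in> {1..q}" "\<And>c. c \<in> C \<Longrightarrow> fst c = a \<Longrightarrow> fst (snd c) \<noteq> b"
      by (rule xlayer_misses_value[where g = "\<lambda>c. fst (snd c)"]) blast
    have "(a, b, z) \<notin> C" for z
      using b(2)[of "(a, b, z)"] by auto
    with b(1) show ?thesis by blast
  qed
  then obtain f where f: "\<And>a. a \<in> ?D \<Longrightarrow> f a \<in> {1..q} \<and> (\<forall>z. (a, f a, z) \<notin> C)"
    by metis
  have "inj_on f ?D"
  proof (rule inj_onI)
    fix a a' assume "a \<in> ?D" "a' \<in> ?D" "f a = f a'"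
    then show "a = a'"
      using Kq3_empty_columns_unique[OF DLD, of a "f a" a'] f[of a] f[of a'] by auto
  qed
  have "(\<Sum>a\<in>{1..q}. q - xlayer_card C a) = (\<Sum>a\<in>?D. q - xlayer_card C a)"
    by (rule sum.mono_neutral_right) auto
  also have "\<dots> \<le> (\<Sum>a\<in>?D. ylayer_card C (f a) - q)"
  proof (rule sum_mono)
    fix a assume "a \<in> ?D"
    with f Kq3_layer_cards_ge_if_column_empty[OF DLD \<open>3 \<le> q\<close>, of a "f a"]
    show "q - xlayer_card C a \<le> ylayer_card C (f a) - q" by auto
  qed
  also have "\<dots> = (\<Sum>b\<in>f ` ?D. ylayer_card C b - q)"
    by (simp only: sum.reindex[OF \<open>inj_on f ?D\<close>] comp_def)
  also have "\<dots> \<le> (\<Sum>b\<in>{1..q}. ylayer_card C b - q)"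
    by (rule sum_mono2) (use f in auto)
  finally show ?thesis .
qed

lemma Kq3_DLD_card_ge_if_3_le:
  assumes DLD: "is_DLD (Kq3_vertices q) Kq3_adj C" and "3 \<le> q"
  shows "q^2 \<le> card C"
proof -
  have DLD': "is_DLD (Kq3_vertices q) Kq3_adj (swap12 ` C)"
    by (rule is_DLD_image[OF DLD inj_swap12 swap12_Kq3_vertices]) simp
  have C: "C \<subseteq> Kq3_vertices q" "swap12 ` C \<subseteq> Kq3_vertices q"
    using DLD DLD' by (simp_all add: is_DLD_def)
  have "card (swap12 ` C) = card C"
    by (simp add: card_image inj_on_subset[OF inj_swap12])
  have "card C + (\<Sum>a\<in>{1..q}. q - xlayer_card C a) = q^2 + (\<Sum>a\<in>{1..q}. xlayer_card C a - q)"
    by (rule card_add_xdeficit[OF C(1)])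
  moreover have "card C + (\<Sum>b\<in>{1..q}. q - ylayer_card C b) = q^2 + (\<Sum>b\<in>{1..q}. ylayer_card C b - q)"
    using card_add_xdeficit[OF C(2)] by (simp add: xlayer_card_swap12 \<open>card (swap12 ` C) = card C\<close>)
  moreover have "(\<Sum>a\<in>{1..q}. q - xlayer_card C a) \<le> (\<Sum>b\<in>{1..q}. ylayer_card C b - q)"
    by (rule Kq3_xdeficit_le_yexcess[OF DLD \<open>3 \<le> q\<close>])
  moreover have "(\<Sum>b\<in>{1..q}. q - ylayer_card C b) \<le> (\<Sum>a\<in>{1..q}. xlayer_card C a - q)"
    using Kq3_xdeficit_le_yexcess[OF DLD' \<open>3 \<le> q\<close>] by (simp add: xlayer_card_swap12 ylayer_card_swap12)
  ultimately show ?thesis by linarith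
qed

subsection \<open>The cube \<open>K\<^sub>2\<^sup>3\<close>\<close>

lemma K2_coord_flip:
  assumes "x \<in> {1..2::nat}"
  shows "3 - x \<in> {1..2}" "3 - x \<noteq> x" "3 - (3 - x) = x"
proof -
  from assms have "x = 1 \<or> x = 2"
    by (auto simp: le_Suc_eq numeral_2_eq_2)
  then show "3 - x \<in> {1..2}" "3 - x \<noteq> x" "3 - (3 - x) = x"
    by auto
qed

lemma K2_closed_nbhd:
  assumes "(a, b, c) \<in> Kq3_vertices 2"
  shows "closed_nbhd (Kq3_vertices 2) Kq3_adj (a, b, c)
    = {(a, b, c), (3 - a, b, c), (a, 3 - b, c), (a, b, 3 - c)}"
  using assms by (auto simp: closed_nbhd_def)

lemma K2_free_corner:
  assumes C: "C \<subseteq> Kq3_vertices 2" "finite C" and small: "xlayer_card C a \<le> 1"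
  obtains b z where "b \<in> {1..2}" "z \<in> {1..2}"
    "(a, b, z) \<notin> C" "(a, 3 - b, z) \<notin> C" "(a, b, 3 - z) \<notin> C"
proof (cases "{c \<in> C. fst c = a} = {}")
  case True
  then show ?thesis using that[of 1 1] by auto
next
  case False
  then obtain b0 z0 where p: "(a, b0, z0) \<in> C" by auto
  have "finite {c \<in> C. fst c = a}" "card {c \<in> C. fst c = a} \<le> Suc 0"
    using C(2) small by (simp_all add: xlayer_card_def)
  note at_most_one = card_le_Suc0_iff_eq[OF this(1), THEN iffD1, rule_format, OF this(2)]
  have avoid: "(a, y, w) \<notin> C" if "y \<noteq> b0 \<or> w \<noteq> z0" for y w
  proof
    assume "(a, y, w) \<in> C"
    with p have "(a, y, w) = (a, b0, z0)"
      by (intro at_most_one) simp_all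
    with that show False by simp
  qed
  have "b0 \<in> {1..2}" "z0 \<in> {1..2}"
    using p C(1) by auto
  note flip = K2_coord_flip[OF this(1)] K2_coord_flip[OF this(2)]
  show ?thesis
  proof (rule that[of "3 - b0" "3 - z0"])
    show "3 - b0 \<in> {1..2}" "3 - z0 \<in> {1..2}"
      by (fact flip)+
  qed (simp_all add: flip avoid)
qed

lemma K2_forced_codewords:
  assumes DLD: "is_DLD (Kq3_vertices 2) Kq3_adj C" and abz: "a \<in> {1..2}" "b \<in> {1..2}" "z \<in> {1..2}"
    and free: "(a, b, z) \<notin> C" "(a, 3 - b, z) \<notin> C" "(a, b, 3 - z) \<notin> C"
  shows "{(3 - a, b, z), (3 - a, 3 - b, z), (3 - a, b, 3 - z)} \<subseteq> C"
proof
  let ?V = "Kq3_vertices 2"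
  note flip = K2_coord_flip[OF abz(1)] K2_coord_flip[OF abz(2)] K2_coord_flip[OF abz(3)]
  have v: "(a, b, z) \<in> ?V" "(a, b, z) \<notin> C"
    using abz free by auto
  have I_v: "I_set ?V Kq3_adj C (a, b, z) \<subseteq> {(3 - a, b, z)}"
    using free K2_closed_nbhd[OF v(1)] by (auto simp: I_set_def)
  fix w assume w: "w \<in> {(3 - a, b, z), (3 - a, 3 - b, z), (3 - a, b, 3 - z)}"
  show "w \<in> C"
  proof (rule is_DLD_mem_if_I_set_subset[OF DLD v])
    show "w \<in> ?V" "w \<noteq> (a, b, z)"
      using w abz flip by auto
    have "(3 - a, b, z) \<in> closed_nbhd ?V Kq3_adj w"
      using w abz flip by (auto simp: closed_nbhd_def)
    with I_v show "I_set ?V Kq3_adj C (a, b, z) \<subseteq> closed_nbhd ?V Kq3_adj w"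
      by blast
  qed
qed

lemma K2_DLD_card_ge:
  assumes DLD: "is_DLD (Kq3_vertices 2) Kq3_adj C"
  shows "4 \<le> card C"
proof (rule ccontr)
  let ?V = "Kq3_vertices 2"
  assume "\<not> 4 \<le> card C"
  have C: "C \<subseteq> ?V" "finite C"
    using DLD is_DLD_finite[OF DLD] by (simp_all add: is_DLD_def)
  have "{1..2::nat} = {1, 2}" by auto
  then have "xlayer_card C 1 + xlayer_card C 2 = card C"
    using sum_xlayer_card[OF C(1)] by simp
  then have "xlayer_card C 1 \<le> 1 \<or> xlayer_card C 2 \<le> 1"
    using \<open>\<not> 4 \<le> card C\<close> by linarith
  moreover have "(1::nat) \<in> {1..2}" "(2::nat) \<in> {1..2}"
    by simp_all
  ultimately obtain a where a: "a \<in> {1..2}" "xlayer_card C a \<le> 1"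
    by blast
  obtain b z where bz: "b \<in> {1..2}" "z \<in> {1..2}"
    and free: "(a, b, z) \<notin> C" "(a, 3 - b, z) \<notin> C" "(a, b, 3 - z) \<notin> C"
    using K2_free_corner[OF C a(2)] by blast
  note flip = K2_coord_flip[OF a(1)] K2_coord_flip[OF bz(1)] K2_coord_flip[OF bz(2)]
  let ?W = "{(3 - a, b, z), (3 - a, 3 - b, z), (3 - a, b, 3 - z)}"
  have "?W \<subseteq> C"
    by (rule K2_forced_codewords[OF DLD a(1) bz free])
  moreover have "card ?W = 3"
    using flip by auto
  ultimately have C_eq: "?W = C"
    by (intro card_seteq[OF C(2)]) (use \<open>\<not> 4 \<le> card C\<close> in linarith)+
  define u where "u = (a, 3 - b, 3 - z)"
  have u: "u \<in> ?V" "u \<notin> C"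
    using a flip by (auto simp: u_def C_eq[symmetric])
  have "I_set ?V Kq3_adj C u = {}"
    using K2_closed_nbhd[of a "3 - b" "3 - z"] u(1) flip by (auto simp: I_set_def u_def C_eq[symmetric])
  moreover have "(a, b, z) \<in> ?V" "(a, b, z) \<noteq> u"
    using a bz flip by (auto simp: u_def)
  ultimately have "(a, b, z) \<in> C"
    using is_DLD_mem_if_I_set_subset[OF DLD u] by simp
  with free(1) show False ..
qed

lemma Kq3_DLD_card_ge:
  assumes "is_DLD (Kq3_vertices q) Kq3_adj C" "2 \<le> q"
  shows "q^2 \<le> card C"
proof (cases "q = 2")
  case True
  with assms(1) K2_DLD_card_ge show ?thesis by simp
next
  case False
  with assms Kq3_DLD_card_ge_if_3_le show ?thesis by simp
qed

subsection \<open>The zero-sum code\<close>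

lemma dvd_add_iff_eq_complement:
  fixes q s c :: nat
  assumes "0 < q" "c \<in> {1..q}"
  shows "q dvd s + c \<longleftrightarrow> c = q - s mod q"
proof -
  have r: "s mod q < q" using assms(1) by simp
  have "q dvd s + c \<longleftrightarrow> q dvd s mod q + c"
    by (simp add: dvd_eq_mod_eq_0 mod_add_left_eq)
  also have "\<dots> \<longleftrightarrow> s mod q + c = q"
  proof
    assume "q dvd s mod q + c"
    then obtain k where k: "s mod q + c = q * k" by (rule dvdE)
    have "1 \<le> c" "c \<le> q"
      using assms(2) by simp_all
    then have "0 < q * k" "q * k < q * 2"
      using r unfolding k[symmetric] by linarith+
    then have "0 < k" "k < 2"
      by simp_all
    then have "k = 1"
      by linarith
    with k show "s mod q + c = q" by simp
  qed simp
  finally show ?thesis using r by linarith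
qed

definition zero_sum_code :: "nat \<Rightarrow> vtx set" where
  "zero_sum_code q = {(a, b, c) \<in> Kq3_vertices q. q dvd a + b + c}"

lemma mem_zero_sum_code:
  assumes "0 < q"
  shows "(a, b, c) \<in> zero_sum_code q \<longleftrightarrow> a \<in> {1..q} \<and> b \<in> {1..q} \<and> c = q - (a + b) mod q"
proof -
  have "q - (a + b) mod q \<in> {1..q}"
    using assms by (simp add: Suc_leI)
  then show ?thesis
    using dvd_add_iff_eq_complement[OF assms, of c "a + b"] by (auto simp: zero_sum_code_def)
qed

lemma zero_sum_code_on_lines:
  assumes "0 < q" "(a, b, c) \<in> Kq3_vertices q"
  shows "(q - (b + c) mod q, b, c) \<in> zero_sum_code q"
    and "(a, q - (a + c) mod q, c) \<in> zero_sum_code q"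
    and "(a, b, q - (a + b) mod q) \<in> zero_sum_code q"
proof -
  have compl: "q - s mod q \<in> {1..q}" for s
    using assms(1) by (simp add: Suc_leI)
  have "q dvd s + (q - s mod q)" for s
    using dvd_add_iff_eq_complement[OF assms(1) compl] by simp
  from this[of "b + c"] this[of "a + c"] this[of "a + b"]
  have "q dvd q - (b + c) mod q + b + c" "q dvd a + (q - (a + c) mod q) + c"
    "q dvd a + b + (q - (a + b) mod q)"
    by (simp_all add: ac_simps)
  with assms(2) compl show "(q - (b + c) mod q, b, c) \<in> zero_sum_code q"
    and "(a, q - (a + c) mod q, c) \<in> zero_sum_code q"
    and "(a, b, q - (a + b) mod q) \<in> zero_sum_code q"
    by (simp_all add: zero_sum_code_def)
qed

lemma card_zero_sum_code:
  assumes "0 < q"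
  shows "card (zero_sum_code q) = q^2"
proof -
  let ?f = "\<lambda>(a, b). (a, b, q - (a + b) mod q)"
  have "zero_sum_code q = ?f ` ({1..q} \<times> {1..q})"
    using mem_zero_sum_code[OF assms] by force
  moreover have "inj_on ?f ({1..q} \<times> {1..q})"
    by (auto intro: inj_onI)
  ultimately show ?thesis
    by (simp add: card_image power2_eq_square)
qed

lemma zero_sum_code_is_DLD:
  assumes "0 < q"
  shows "is_DLD (Kq3_vertices q) Kq3_adj (zero_sum_code q)"
proof -
  let ?V = "Kq3_vertices q" and ?C = "zero_sum_code q"
  let ?I = "I_set ?V Kq3_adj ?C"
  have "?C \<subseteq> ?V"
    by (auto simp: zero_sum_code_def)
  moreover have "?C \<noteq> {}"
    using zero_sum_code_on_lines(3)[OF assms, of 1 1 1] assms by auto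
  moreover have "?I u - ?I v \<noteq> {}"
    if u: "u \<in> ?V - ?C" and v: "v \<in> ?V - ?C" and "u \<noteq> v" for u v
  proof -
    obtain a b c where u_eq: "u = (a, b, c)" by (cases u)
    define x y z where "x = q - (b + c) mod q" and "y = q - (a + c) mod q" and "z = q - (a + b) mod q"
    have line: "(x, b, c) \<in> ?C" "(a, y, c) \<in> ?C" "(a, b, z) \<in> ?C"
      using zero_sum_code_on_lines[OF assms] u by (auto simp: u_eq x_def y_def z_def)
    moreover have "x \<noteq> a" "y \<noteq> b" "z \<noteq> c"
      using line u by (auto simp: u_eq)
    ultimately have "(x, b, c) \<in> ?I u" "(a, y, c) \<in> ?I u" "(a, b, z) \<in> ?I u"
      using u by (auto simp: mem_I_set u_eq zero_sum_code_def)
    moreover have "\<not> {(x, b, c), (a, y, c), (a, b, z)} \<subseteq> ?I v"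
    proof
      assume "{(x, b, c), (a, y, c), (a, b, z)} \<subseteq> ?I v"
      then have "Kq3_adj v (x, b, c)" "Kq3_adj v (a, y, c)" "Kq3_adj v (a, b, z)"
        using v line by (auto simp: mem_I_set)
      then show False
        using \<open>u \<noteq> v\<close> \<open>x \<noteq> a\<close> \<open>y \<noteq> b\<close> \<open>z \<noteq> c\<close> by (cases v) (auto simp: u_eq)
    qed
    ultimately show ?thesis by blast
  qed
  ultimately show ?thesis
    unfolding is_DLD_def by blast
qed

theorem theorem23:
  fixes q :: nat
  assumes "q \<ge> 2"
  shows "gamma_DLD (Kq3_vertices q) Kq3_adj = q ^ 2"
proof (rule gamma_DLD_eqI)
  show "is_DLD (Kq3_vertices q) Kq3_adj (zero_sum_code q)"
    using assms by (simp add: zero_sum_code_is_DLD)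
  show "card (zero_sum_code q) = q ^ 2"
    using assms by (simp add: card_zero_sum_code)
  show "q ^ 2 \<le> card C" if "is_DLD (Kq3_vertices q) Kq3_adj C" for C
    using Kq3_DLD_card_ge[OF that assms] .
qed

end
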